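(* Let $m>3$ be such that a Steiner triple system $\mathrm{STS}(\mathcal M)$ on $\mathcal M$ exists. Then the hypergraph PIN model on $\mathcal H_{\mathrm{STS}}=(\mathcal M,\mathrm{STS}(\mathcal M))$ is strict Type $\mathcal S$.
   Context: Let $\mathcal M=\{1,\dots,m\}$. A Steiner triple system $\mathrm{STS}(\mathcal M)$ is a collection of 3-element subsets of $\mathcal M$ such that every 2-element subset of $\mathcal M$ is contained in exactly one member of the collection. A hypergraph PIN model on $\mathcal H=(\mathcal M,\mathcal E)$ is defined as follows. Let $\mathcal E^{(n)}$ contain $n$ copies of each hyperedge. Independent Bernoulli(1/2) variables $\xi_e$ are attached to the $e\in\mathcal E^{(n)}$, and $X^n_i=(\xi_e:e\in\mathcal E^{(n)},\ i\in e)$; the single-letter source $X_{\mathcal M}$ is the case $n=1$. Entropies are base 2. $\Delta(\mathcal P)=\frac1{|\mathcal P|-1}[\sum_{A\in\mathcal P}H(X_A)-H(X_{\mathcal M})]$ for partitions with at least 2 cells, where $X_A=(X_i:i\in A)$. The source is strict Type $\mathcal S$ if the singleton partition $\{\{1\},\dots,\{m\}\}$ is the unique minimizer of $\Delta$. *)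

theory Defs
  imports "HOL-Probability.Probability_Mass_Function" "HOL-Library.Disjoint_Sets"
begin

definition is_STS :: "nat set \<Rightarrow> nat set set \<Rightarrow> bool" where
  "is_STS M E \<longleftrightarrow> (\<forall>e\<in>E. e \<subseteq> M \<and> card e = 3) \<and>
     (\<forall>i\<in>M. \<forall>j\<in>M. i \<noteq> j \<longrightarrow> (\<exists>!e. e \<in> E \<and> {i, j} \<subseteq> e))"

text \<open>Single-letter hypergraph PIN source (n = 1): independent uniform bits xi_e,
  one per hyperedge e in E; the joint law of xi is uniform on the functions E -> bool.\<close>
definition pin_bits :: "nat set set \<Rightarrow> (nat set \<Rightarrow> bool) pmf" where
  "pin_bits E = pmf_of_set (PiE E (\<lambda>_. UNIV))"

definition pin_X :: "nat set set \<Rightarrow> nat \<Rightarrow> (nat set \<Rightarrow> bool) \<Rightarrow> (nat set \<Rightarrow> bool)" where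
  "pin_X E i xi = restrict xi {e \<in> E. i \<in> e}"

definition pin_XA :: "nat set set \<Rightarrow> nat set \<Rightarrow> (nat set \<Rightarrow> bool) \<Rightarrow> (nat \<Rightarrow> nat set \<Rightarrow> bool)" where
  "pin_XA E A xi = (\<lambda>i\<in>A. pin_X E i xi)"

definition entropy2 :: "'a pmf \<Rightarrow> real" where
  "entropy2 p = - (\<Sum>x\<in>set_pmf p. pmf p x * log 2 (pmf p x))"

definition pin_H :: "nat set set \<Rightarrow> nat set \<Rightarrow> real" where
  "pin_H E A = entropy2 (map_pmf (pin_XA E A) (pin_bits E))"

definition pin_Delta :: "nat set \<Rightarrow> nat set set \<Rightarrow> nat set set \<Rightarrow> real" where
  "pin_Delta M E P = ((\<Sum>A\<in>P. pin_H E A) - pin_H E M) / (real (card P) - 1)"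

definition singleton_partition :: "nat set \<Rightarrow> nat set set" where
  "singleton_partition M = (\<lambda>i. {i}) ` M"

definition strict_type_S :: "nat set \<Rightarrow> nat set set \<Rightarrow> bool" where
  "strict_type_S M E \<longleftrightarrow>
     partition_on M (singleton_partition M) \<and> card (singleton_partition M) \<ge> 2 \<and>
     (\<forall>P. partition_on M P \<and> card P \<ge> 2 \<and> P \<noteq> singleton_partition M \<longrightarrow>
          pin_Delta M E (singleton_partition M) < pin_Delta M E P)"

end

theory Submission
  imports Defs "HOL-Probability.Product_PMF"
begin

text \<open>In the PIN model \<open>H(X\<^sub>A)\<close> is the number of hyperedges meeting \<open>A\<close>. In a Steiner
  triple system every point lies in \<open>(m - 1)/2\<close> triples and there are \<open>m(m - 1)/6\<close>
  triples, so \<open>\<Delta>\<close> of the singleton partition is \<open>m/3\<close>. A cell of size \<open>a\<close> meets at least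
  \<open>m/3 + a(m - 3)/6\<close> triples, strictly more when \<open>a \<ge> 2\<close> (by inclusion-exclusion for
  \<open>a = 2\<close>, and for \<open>a \<ge> 3\<close> by counting the pairs meeting the cell, at most three per
  triple). Summing over the \<open>k\<close> cells of any other partition gives
  \<open>\<Sum>H(X\<^sub>A) - H(X\<^sub>M) > (k - 1) m/3\<close>.\<close>

section \<open>Entropy of the PIN model\<close>

lemma entropy2_pmf_of_set:
  assumes "finite S" "S \<noteq> {}"
  shows "entropy2 (pmf_of_set S) = log 2 (card S)"
proof -
  have c: "card S > 0" using assms by (simp add: card_gt_0_iff)
  have "entropy2 (pmf_of_set S) = - (\<Sum>x\<in>S. (1 / card S) * log 2 (1 / card S))"
    unfolding entropy2_def using assms by (simp add: pmf_of_set)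
  also have "\<dots> = log 2 (card S)" using c by (simp add: log_divide)
  finally show ?thesis .
qed

lemma entropy2_map_pmf_inj:
  assumes "inj_on g (set_pmf p)"
  shows "entropy2 (map_pmf g p) = entropy2 p"
proof -
  have "entropy2 (map_pmf g p)
      = - (\<Sum>x\<in>set_pmf p. pmf (map_pmf g p) (g x) * log 2 (pmf (map_pmf g p) (g x)))"
    unfolding entropy2_def using assms by (simp add: sum.reindex)
  also have "\<dots> = entropy2 p"
    unfolding entropy2_def using assms by (simp add: pmf_map_inj)
  finally show ?thesis .
qed

lemma map_pmf_restrict_pmf_of_set_PiE:
  assumes "finite E" "F \<subseteq> E" "\<And>e. finite (B e)" "\<And>e. B e \<noteq> {}"
  shows "map_pmf (\<lambda>f. restrict f F) (pmf_of_set (PiE E B)) = pmf_of_set (PiE F B)"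
proof -
  have uniform: "pmf_of_set (PiE X B) = Pi_pmf X undefined (\<lambda>e. pmf_of_set (B e))"
    if "finite X" for X
  proof -
    have "PiE X B = PiE_dflt X undefined B"
      by (auto simp: PiE_def PiE_dflt_def extensional_def)
    then show ?thesis using that assms(3,4) by (simp add: Pi_pmf_of_set)
  qed
  have restrict_eq: "(\<lambda>f. restrict f F) = (\<lambda>f e. if e \<in> F then f e else undefined)"
    by (auto simp: restrict_def)
  show ?thesis
    unfolding uniform[OF assms(1)] uniform[OF finite_subset[OF assms(2,1)]] restrict_eq
    by (rule Pi_pmf_subset[OF assms(1,2), symmetric])
qed

definition edges_meeting :: "nat set set \<Rightarrow> nat set \<Rightarrow> nat set set" where
  "edges_meeting E A = {e \<in> E. e \<inter> A \<noteq> {}}"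

text \<open>\<open>X\<^sub>A\<close> is an injective image of the bits on the hyperedges meeting \<open>A\<close>,
  and these bits are uniform.\<close>
lemma pin_H_eq_card_edges_meeting:
  assumes "finite E"
  shows "pin_H E A = card (edges_meeting E A)"
proof -
  define F where "F = edges_meeting E A"
  define bits where "bits = PiE F (\<lambda>_. UNIV :: bool set)"
  define g where "g = (\<lambda>h::nat set \<Rightarrow> bool. \<lambda>i\<in>A. restrict h {e\<in>E. i \<in> e})"
  have FE: "F \<subseteq> E" unfolding F_def edges_meeting_def by auto
  have fF: "finite F" using assms FE finite_subset by blast
  have fin: "finite bits" and ne: "bits \<noteq> {}"
    unfolding bits_def using fF by (simp_all add: finite_PiE PiE_eq_empty_iff)
  have factor: "pin_XA E A = g \<circ> (\<lambda>xi. restrict xi F)"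
    unfolding g_def pin_XA_def pin_X_def F_def edges_meeting_def
    by (auto simp: restrict_def fun_eq_iff)
  have inj: "inj_on g bits"
  proof (rule inj_onI)
    fix h1 h2 assume h: "h1 \<in> bits" "h2 \<in> bits" and eq: "g h1 = g h2"
    show "h1 = h2"
    proof (rule PiE_ext[OF h[unfolded bits_def]])
      fix e assume "e \<in> F"
      then obtain i where i: "i \<in> A" "i \<in> e" "e \<in> E"
        unfolding F_def edges_meeting_def by auto
      have "g h1 i e = g h2 i e" using eq by simp
      then show "h1 e = h2 e" using i unfolding g_def by simp
    qed
  qed
  have "pin_H E A = entropy2 (map_pmf g (pmf_of_set bits))"
    unfolding pin_H_def pin_bits_def factor bits_def
    by (simp add: map_pmf_compose map_pmf_restrict_pmf_of_set_PiE[OF assms FE])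
  also have "\<dots> = entropy2 (pmf_of_set bits)"
    by (rule entropy2_map_pmf_inj) (use inj ne fin in simp)
  also have "\<dots> = log 2 (2 ^ card F)"
    unfolding bits_def using fF by (simp add: entropy2_pmf_of_set[OF fin ne, unfolded bits_def] card_PiE)
  finally show ?thesis unfolding F_def by (simp add: log_nat_power)
qed

section \<open>Counting in a Steiner triple system\<close>

lemma edges_meeting_singleton [simp]: "edges_meeting E {x} = {e \<in> E. x \<in> e}"
  by (auto simp: edges_meeting_def)

lemma STS_edgeD:
  assumes "is_STS M E" "e \<in> E"
  shows "e \<subseteq> M" "card e = 3"
  using assms unfolding is_STS_def by auto

lemma STS_finite:
  assumes "is_STS M E" "finite M"
  shows "finite E"
proof (rule finite_subset)
  show "E \<subseteq> Pow M" using STS_edgeD(1)[OF assms(1)] by blast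
qed (use assms(2) in simp)

lemma STS_card_edges_containing_pair:
  assumes "is_STS M E" "p \<subseteq> M" "card p = 2"
  shows "card {e \<in> E. p \<subseteq> e} = 1"
proof -
  obtain i j where "p = {i, j}" "i \<noteq> j" using assms(3) card_2_iff by metis
  then have "\<exists>!e. e \<in> E \<and> p \<subseteq> e" using assms(1,2) unfolding is_STS_def by auto
  then obtain e where "{e \<in> E. p \<subseteq> e} = {e}" by auto
  then show ?thesis by simp
qed

lemma STS_edges_meeting_ground:
  assumes "is_STS M E"
  shows "edges_meeting E M = E"
proof -
  have "e \<inter> M \<noteq> {}" if "e \<in> E" for e
  proof -
    have "e \<subseteq> M" "e \<noteq> {}" using STS_edgeD[OF assms that] by auto
    then show ?thesis by blast
  qed
  then show ?thesis unfolding edges_meeting_def by auto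
qed

text \<open>The other points pair up along the triples through \<open>x\<close>.\<close>
lemma STS_replication:
  assumes S: "is_STS M E" and fM: "finite M" and x: "x \<in> M"
  shows "card M - 1 = 2 * card (edges_meeting E {x})"
proof -
  define T where "T = {e \<in> E. x \<in> e}"
  have "(\<Sum>y\<in>M - {x}. card {e \<in> T. y \<in> e}) = 2 * card T"
  proof (rule sum_multicount)
    show "finite (M - {x})" "finite T"
      using fM STS_finite[OF S fM] unfolding T_def by auto
    show "\<forall>e\<in>T. card {y \<in> M - {x}. y \<in> e} = 2"
    proof
      fix e assume e: "e \<in> T"
      then have "{y \<in> M - {x}. y \<in> e} = e - {x}" and "x \<in> e"
        using STS_edgeD(1)[OF S] unfolding T_def by auto
      then show "card {y \<in> M - {x}. y \<in> e} = 2"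
        using e STS_edgeD(2)[OF S] unfolding T_def by (simp add: card_Diff_singleton)
    qed
  qed
  moreover have "card {e \<in> T. y \<in> e} = 1" if "y \<in> M - {x}" for y
  proof -
    have "{e \<in> T. y \<in> e} = {e \<in> E. {x, y} \<subseteq> e}" unfolding T_def by auto
    then show ?thesis using that x STS_card_edges_containing_pair[OF S, of "{x, y}"] by auto
  qed
  ultimately show ?thesis using x fM unfolding T_def by simp
qed

lemma STS_card_edges:
  assumes S: "is_STS M E" and fM: "finite M"
  shows "6 * card E = card M * (card M - 1)"
proof -
  have "{x \<in> M. x \<in> e} = e" if "e \<in> E" for e
    using STS_edgeD(1)[OF S that] by auto
  then have "(\<Sum>x\<in>M. card (edges_meeting E {x})) = 3 * card E"
    using STS_edgeD(2)[OF S] by (auto intro!: sum_multicount STS_finite[OF S fM] fM)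
  then have "6 * card E = (\<Sum>x\<in>M. 2 * card (edges_meeting E {x}))"
    by (simp add: sum_distrib_left[symmetric])
  also have "\<dots> = (\<Sum>x\<in>M. card M - 1)"
    using STS_replication[OF S fM] by simp
  finally show ?thesis by simp
qed

lemma STS_card_edges_meeting_pair:
  assumes S: "is_STS M E" and fM: "finite M" and xy: "x \<in> M" "y \<in> M" "x \<noteq> y"
  shows "card (edges_meeting E {x, y}) + 1
         = card (edges_meeting E {x}) + card (edges_meeting E {y})"
proof -
  have "edges_meeting E {x, y} = {e \<in> E. x \<in> e} \<union> {e \<in> E. y \<in> e}"
    unfolding edges_meeting_def by auto
  moreover have "{e \<in> E. x \<in> e} \<inter> {e \<in> E. y \<in> e} = {e \<in> E. {x, y} \<subseteq> e}" by auto
  then have "card ({e \<in> E. x \<in> e} \<inter> {e \<in> E. y \<in> e}) = 1"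
    using STS_card_edges_containing_pair[OF S, of "{x, y}"] xy by simp
  ultimately show ?thesis
    using card_Un_Int[of "{e \<in> E. x \<in> e}" "{e \<in> E. y \<in> e}"] STS_finite[OF S fM] by simp
qed

text \<open>Each pair meeting \<open>A\<close> lies in exactly one triple, which then meets \<open>A\<close>,
  and a triple contains only three pairs.\<close>
lemma STS_card_pairs_meeting_le:
  assumes S: "is_STS M E" and fM: "finite M"
  shows "card {p. p \<subseteq> M \<and> card p = 2 \<and> p \<inter> A \<noteq> {}} \<le> 3 * card (edges_meeting E A)"
proof -
  define Pairs where "Pairs = {p. p \<subseteq> M \<and> card p = 2 \<and> p \<inter> A \<noteq> {}}"
  define T where "T = edges_meeting E A"
  have fPairs: "finite Pairs" unfolding Pairs_def using fM by simp
  have fT: "finite T" unfolding T_def edges_meeting_def using STS_finite[OF S fM] by simp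
  have "card Pairs = (\<Sum>p\<in>Pairs. card {e \<in> T. p \<subseteq> e})"
  proof -
    have "{e \<in> T. p \<subseteq> e} = {e \<in> E. p \<subseteq> e}" if "p \<in> Pairs" for p
      using that unfolding Pairs_def T_def edges_meeting_def by auto
    then show ?thesis
      using STS_card_edges_containing_pair[OF S] unfolding Pairs_def by simp
  qed
  also have "\<dots> = (\<Sum>e\<in>T. card {p \<in> Pairs. p \<subseteq> e})"
    using sum.swap_restrict[OF fPairs fT, of "\<lambda>_ _. 1::nat" "\<lambda>p e. p \<subseteq> e"] by simp
  also have "\<dots> \<le> (\<Sum>e\<in>T. 3)"
  proof (rule sum_mono)
    fix e assume "e \<in> T"
    then have c3: "card e = 3"
      using STS_edgeD(2)[OF S] unfolding T_def edges_meeting_def by auto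
    then have fe: "finite e" by (intro card_ge_0_finite) simp
    have "{p \<in> Pairs. p \<subseteq> e} \<subseteq> {p. p \<subseteq> e \<and> card p = 2}" unfolding Pairs_def by auto
    moreover have "card {p. p \<subseteq> e \<and> card p = 2} = 3"
      using n_subsets[OF fe, of 2] c3 by (simp add: choose_two)
    ultimately show "card {p \<in> Pairs. p \<subseteq> e} \<le> 3"
      using card_mono[of "{p. p \<subseteq> e \<and> card p = 2}"] fe by simp
  qed
  finally show ?thesis unfolding Pairs_def T_def by simp
qed

lemma card_pairs_meeting:
  assumes "finite M" "A \<subseteq> M"
  shows "card {p. p \<subseteq> M \<and> card p = 2 \<and> p \<inter> A \<noteq> {}} + ((card M - card A) choose 2)
         = card M choose 2"
proof -
  have "{p. p \<subseteq> M \<and> card p = 2} =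
        {p. p \<subseteq> M \<and> card p = 2 \<and> p \<inter> A \<noteq> {}} \<union> {p. p \<subseteq> M - A \<and> card p = 2}"
    by auto
  moreover have "finite {p. p \<subseteq> M \<and> card p = 2}" using assms(1) by simp
  ultimately have "card {p. p \<subseteq> M \<and> card p = 2} =
        card {p. p \<subseteq> M \<and> card p = 2 \<and> p \<inter> A \<noteq> {}} + card {p. p \<subseteq> M - A \<and> card p = 2}"
    using assms(1) by (subst card_Un_disjoint[symmetric]) auto
  moreover have "finite A" using assms finite_subset by blast
  ultimately show ?thesis
    using assms n_subsets[of M 2] n_subsets[of "M - A" 2] by (simp add: card_Diff_subset)
qed

lemma of_nat_choose_two: "real (n choose 2) = real n * (real n - 1) / 2"
  by (cases n) (auto simp: choose_two field_char_0_class.of_nat_div mod_eq_0_iff_dvd algebra_simps)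

lemma STS_replication_real:
  assumes S: "is_STS M E" and fM: "finite M" and x: "x \<in> M"
  shows "2 * real (card (edges_meeting E {x})) = real (card M) - 1"
proof -
  have "0 < card M" using fM x card_gt_0_iff by blast
  then show ?thesis using STS_replication[OF S fM x] by (simp add: of_nat_diff)
qed

lemma cell_bound_of_pair_count:
  fixes m a T :: real
  assumes "m * (m - 1) - (m - a) * (m - a - 1) \<le> 6 * T" "2 < a" "a < m"
  shows "m / 3 + a * (m - 3) / 6 < T"
proof -
  have "m * (m - 1) - (m - a) * (m - a - 1) = 2 * m + a * (m - 3) + (a - 2) * (m - a)"
    by (simp add: algebra_simps)
  moreover have "(a - 2) * (m - a) > 0" using assms(2,3) by simp
  ultimately show ?thesis using assms(1) by linarith
qed

lemma STS_card_edges_meeting_gt: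
  assumes S: "is_STS M E" and fM: "finite M" and m3: "3 < card M"
    and AM: "A \<subseteq> M" "A \<noteq> M" and a2: "2 \<le> card A"
  shows "real (card M) / 3 + real (card A) * (real (card M) - 3) / 6
         < real (card (edges_meeting E A))"
proof -
  define m where "m = real (card M)"
  define a where "a = real (card A)"
  define T where "T = real (card (edges_meeting E A))"
  have am: "card A < card M" using AM fM by (simp add: psubset_card_mono psubsetI)
  consider "card A = 2" | "3 \<le> card A" using a2 by linarith
  then have "m / 3 + a * (m - 3) / 6 < T"
  proof cases
    case 1
    then obtain x y where xy: "A = {x, y}" "x \<noteq> y" by (metis card_2_iff)
    then have xyM: "x \<in> M" "y \<in> M" using AM by auto
    have "T + 1 = real (card (edges_meeting E {x})) + real (card (edges_meeting E {y}))"
      using arg_cong[OF STS_card_edges_meeting_pair[OF S fM xyM xy(2)], of real]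
      unfolding T_def xy by simp
    then have "T + 1 = m - 1"
      using STS_replication_real[OF S fM xyM(1)] STS_replication_real[OF S fM xyM(2)]
      unfolding m_def by linarith
    moreover have "m > 3" using m3 unfolding m_def by simp
    ultimately show ?thesis using 1 by (simp add: a_def field_simps)
  next
    case 2
    define pairs where "pairs = real (card {p. p \<subseteq> M \<and> card p = 2 \<and> p \<inter> A \<noteq> {}})"
    have le: "pairs \<le> 3 * T"
      using STS_card_pairs_meeting_le[OF S fM, of A] unfolding pairs_def T_def by linarith
    have eq: "pairs = m * (m - 1) / 2 - (m - a) * (m - a - 1) / 2"
      using arg_cong[OF card_pairs_meeting[OF fM AM(1)], of real] am
      unfolding pairs_def m_def a_def by (simp add: of_nat_choose_two of_nat_diff)
    have "m * (m - 1) - (m - a) * (m - a - 1) = 2 * pairs" using eq by simp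
    also have "\<dots> \<le> 6 * T" using le by simp
    finally show ?thesis
      by (rule cell_bound_of_pair_count) (use 2 am in \<open>simp_all add: a_def m_def\<close>)
  qed
  then show ?thesis unfolding m_def a_def T_def .
qed

lemma STS_card_edges_meeting_ge:
  assumes S: "is_STS M E" and fM: "finite M" and m3: "3 < card M"
    and AM: "A \<subseteq> M" "A \<noteq> M" and Ane: "A \<noteq> {}"
  shows "real (card M) / 3 + real (card A) * (real (card M) - 3) / 6
         \<le> real (card (edges_meeting E A))"
proof (cases "card A = 1")
  case True
  then obtain x where "A = {x}" by (metis card_1_singleton_iff One_nat_def)
  then show ?thesis
    using STS_replication_real[OF S fM, of x] AM True by (auto simp: field_simps)
next
  case False
  moreover have "finite A" using AM(1) fM finite_subset by blast
  ultimately have "2 \<le> card A" using Ane card_gt_0_iff[of A] by linarith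
  then show ?thesis using STS_card_edges_meeting_gt[OF S fM m3 AM] by simp
qed

lemma sum_card_partition_on:
  assumes "finite M" "partition_on M P"
  shows "(\<Sum>A\<in>P. card A) = card M"
proof -
  have "finite A" if "A \<in> P" for A
    using finite_subset[of A M] assms(1) partition_onD1[OF assms(2)] that by auto
  then have "card (\<Union>P) = (\<Sum>A\<in>P. card A)"
    using partition_onD2[OF assms(2)] by (intro card_Union_disjoint)
  then show ?thesis using partition_onD1[OF assms(2)] by simp
qed

lemma partition_on_cell_neq_space:
  assumes "partition_on M P" "2 \<le> card P" "A \<in> P"
  shows "A \<noteq> M"
proof
  assume AM: "A = M"
  have "\<not> P \<subseteq> {A}"
  proof
    assume "P \<subseteq> {A}"
    then have "card P \<le> 1" using card_mono[of "{A}" P] by simp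
    with assms(2) show False by simp
  qed
  then obtain B where B: "B \<in> P" "B \<noteq> A" by auto
  have "B \<subseteq> A" using B(1) AM partition_onD1[OF assms(1)] by blast
  moreover have "A \<inter> B = {}"
    using partition_onD2[OF assms(1)] assms(3) B unfolding disjoint_def by blast
  ultimately have "B = {}" by blast
  with B(1) partition_onD3[OF assms(1)] show False by simp
qed

lemma partition_on_ex_card_ge_2:
  assumes "finite M" "partition_on M P" "P \<noteq> singleton_partition M"
  shows "\<exists>A\<in>P. 2 \<le> card A"
proof (rule ccontr)
  assume no_large_cell: "\<not> ?thesis"
  have "card A = 1" if "A \<in> P" for A
  proof -
    have "finite A" "A \<noteq> {}"
      using assms(1,2) that finite_subset[of A M] unfolding partition_on_def by auto
    then show ?thesis using no_large_cell that card_gt_0_iff[of A] by auto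
  qed
  then have singleton_cells: "\<exists>x. A = {x}" if "A \<in> P" for A
    using that by (simp add: card_1_singleton_iff)
  have "P = singleton_partition M"
  proof (intro equalityI subsetI)
    fix A assume "A \<in> P"
    then show "A \<in> singleton_partition M"
      using singleton_cells partition_onD1[OF assms(2)] unfolding singleton_partition_def by blast
  next
    fix A assume "A \<in> singleton_partition M"
    then obtain x where x: "x \<in> M" "A = {x}" unfolding singleton_partition_def by auto
    then obtain B where "B \<in> P" "x \<in> B" using partition_onD1[OF assms(2)] by auto
    then show "A \<in> P" using singleton_cells x(2) by fastforce
  qed
  with assms(3) show False ..
qed

section \<open>The value of \<open>\<Delta>\<close>\<close>

lemma STS_pin_H_ground:
  assumes S: "is_STS M E" and fM: "finite M"
  shows "6 * pin_H E M = real (card M) * (real (card M) - 1)"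
proof -
  have "real (card M * (card M - 1)) = real (card M) * (real (card M) - 1)"
    by (cases "card M") (auto simp: algebra_simps)
  then show ?thesis
    using arg_cong[OF STS_card_edges[OF S fM], of real] STS_edges_meeting_ground[OF S]
      pin_H_eq_card_edges_meeting[OF STS_finite[OF S fM]] by simp
qed

lemma STS_Delta_singleton_partition:
  assumes S: "is_STS M E" and fM: "finite M" and m2: "2 \<le> card M"
  shows "pin_Delta M E (singleton_partition M) = real (card M) / 3"
proof -
  have fE: "finite E" using STS_finite[OF S fM] .
  have inj: "inj_on (\<lambda>x. {x}) M" by simp
  have "(\<Sum>A\<in>singleton_partition M. pin_H E A) = (\<Sum>x\<in>M. pin_H E {x})"
    unfolding singleton_partition_def by (simp add: sum.reindex[OF inj])
  also have "\<dots> = (\<Sum>x\<in>M. (real (card M) - 1) / 2)"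
    using STS_replication_real[OF S fM] pin_H_eq_card_edges_meeting[OF fE]
    by (intro sum.cong) (auto simp: field_simps)
  finally show ?thesis
    using STS_pin_H_ground[OF S fM] m2 card_image[OF inj]
    unfolding pin_Delta_def singleton_partition_def by (simp add: field_simps)
qed

lemma STS_Delta_gt:
  assumes S: "is_STS M E" and fM: "finite M" and m3: "3 < card M"
    and P: "partition_on M P" "2 \<le> card P" "P \<noteq> singleton_partition M"
  shows "real (card M) / 3 < pin_Delta M E P"
proof -
  define m where "m = real (card M)"
  define k where "k = real (card P)"
  have fP: "finite P" using P(2) by (intro card_ge_0_finite) simp
  have cells: "A \<subseteq> M" "A \<noteq> M" "A \<noteq> {}" if "A \<in> P" for A
    using that P partition_on_cell_neq_space unfolding partition_on_def by auto
  have H: "pin_H E A = real (card (edges_meeting E A))" for A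
    using pin_H_eq_card_edges_meeting[OF STS_finite[OF S fM]] .
  have "(\<Sum>A\<in>P. m / 3 + real (card A) * (m - 3) / 6) < (\<Sum>A\<in>P. pin_H E A)"
  proof (rule sum_strict_mono_ex1[OF fP])
    show "\<forall>A\<in>P. m / 3 + real (card A) * (m - 3) / 6 \<le> pin_H E A"
      using STS_card_edges_meeting_ge[OF S fM m3] cells H unfolding m_def by auto
    obtain A where "A \<in> P" "2 \<le> card A" using partition_on_ex_card_ge_2[OF fM P(1,3)] ..
    then show "\<exists>A\<in>P. m / 3 + real (card A) * (m - 3) / 6 < pin_H E A"
      using STS_card_edges_meeting_gt[OF S fM m3 cells(1,2)] H unfolding m_def by auto
  qed
  also have "(\<Sum>A\<in>P. m / 3 + real (card A) * (m - 3) / 6) = k * m / 3 + m * (m - 3) / 6"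
    using arg_cong[OF sum_card_partition_on[OF fM P(1)], of real]
    unfolding k_def m_def by (simp add: sum.distrib sum_divide_distrib[symmetric] sum_distrib_right[symmetric])
  finally have "k * m / 3 + m * (m - 3) / 6 < (\<Sum>A\<in>P. pin_H E A)" .
  moreover have "k - 1 > 0" using P(2) unfolding k_def by simp
  ultimately show ?thesis
    using STS_pin_H_ground[OF S fM] unfolding pin_Delta_def k_def[symmetric] m_def[symmetric]
    by (simp add: field_simps)
qed

theorem corollary5:
  fixes m :: nat and E :: "nat set set"
  assumes "m > 3" and "is_STS {1..m} E"
  shows "strict_type_S {1..m} E"
proof -
  have partition: "partition_on {1..m} (singleton_partition {1..m})"
    unfolding singleton_partition_def by (rule partition_on_singletons)
  have card: "card (singleton_partition {1..m}) = m"
    unfolding singleton_partition_def by (simp add: card_image)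
  have Delta: "pin_Delta {1..m} E (singleton_partition {1..m}) = real m / 3"
    using STS_Delta_singleton_partition[OF assms(2)] assms(1) by simp
  show ?thesis
    unfolding strict_type_S_def Delta
    using partition card assms(1) STS_Delta_gt[OF assms(2)] by auto
qed

end
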